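(* There exist an argumentation framework $\mathcal F=(F,\rightarrowtail)$ and a set $A\subseteq F$ such that $A$ is not statically tenable, yet every finite subset of $A$ is strongly tenable.
   Context: An argumentation framework (AF) $\mathcal F=(F,\rightarrowtail)$ consists of a (possibly infinite) set $F$ of arguments and a binary attack relation $\rightarrowtail\subseteq F\times F$. An argument $a$ attacks a set $B$ if $a\rightarrowtail b$ for some $b\in B$. $A^+=\{x\in F:\exists a\in A,\ a\rightarrowtail x\}$. A set is conflict-free if none of its elements attacks one of its elements. For $A,B\subseteq F$, $A$ is as cogent as $B$, written $A\succeq B$, if $A$ is conflict-free and every $b\in B$ that attacks $A$ belongs to $A^+$. Static tenability: $A\subseteq F$ is statically tenable if for every finite conflict-free $B\subseteq F$ there is a conflict-free $C\supseteq A$ with $C\succeq B$. Strong tenability game: a strong tenability dispute on $\mathcal F$ is a finite sequence $(X_0,\dots,X_n)$ of subsets of $F$, where even-indexed sets are moves of the Proponent (Pro) and odd-indexed sets are moves of the Opponent (Opp), such that (1) each $X_i$ is conflict-free; (2) $X_i\subseteq X_{i+2}$ whenever both are defined; (3) $X_1$ and each $X_{i+2}\setminus X_i$ are finite; (4) every Pro move $X_{2k}$ with $k\ge 1$ satisfies $X_{2k}\succeq X_{2k-1}$; (5) every Opp move $X_{2k+1}$ satisfies $X_{2k}\not\succeq X_{2k+1}$ (some element of $X_{2k+1}$ attacks $X_{2k}$ and is not in $X_{2k}^+$). Play starts with $X_0=A$ and players alternately extend the sequence so that it remains a dispute. A dispute is concluded if it has no legal extension; a concluded dispute is won by the player who made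 its last move. A strategy for Pro assigns to each dispute ending with an Opp move a legal Pro reply; it is winning if every concluded dispute starting with $X_0=A$ in which Pro follows it is won by Pro (infinite plays count as wins for Pro). $A$ is strongly tenable if Pro has a winning strategy starting with $X_0=A$. *)

theory Defs
  imports Main
begin

definition is_AF :: "'a set \<Rightarrow> ('a \<Rightarrow> 'a \<Rightarrow> bool) \<Rightarrow> bool" where
  "is_AF F att \<longleftrightarrow> (\<forall>x y. att x y \<longrightarrow> x \<in> F \<and> y \<in> F)"

definition attacks_set :: "('a \<Rightarrow> 'a \<Rightarrow> bool) \<Rightarrow> 'a \<Rightarrow> 'a set \<Rightarrow> bool" where
  "attacks_set att a B \<longleftrightarrow> (\<exists>b\<in>B. att a b)"

definition plus_set :: "'a set \<Rightarrow> ('a \<Rightarrow> 'a \<Rightarrow> bool) \<Rightarrow> 'a set \<Rightarrow> 'a set" where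
  "plus_set F att A = {x \<in> F. \<exists>a\<in>A. att a x}"

definition conflict_free :: "('a \<Rightarrow> 'a \<Rightarrow> bool) \<Rightarrow> 'a set \<Rightarrow> bool" where
  "conflict_free att S \<longleftrightarrow> (\<forall>a\<in>S. \<forall>b\<in>S. \<not> att a b)"

definition cogent :: "'a set \<Rightarrow> ('a \<Rightarrow> 'a \<Rightarrow> bool) \<Rightarrow> 'a set \<Rightarrow> 'a set \<Rightarrow> bool" where
  "cogent F att A B \<longleftrightarrow> conflict_free att A \<and>
     (\<forall>b\<in>B. attacks_set att b A \<longrightarrow> b \<in> plus_set F att A)"

definition statically_tenable :: "'a set \<Rightarrow> ('a \<Rightarrow> 'a \<Rightarrow> bool) \<Rightarrow> 'a set \<Rightarrow> bool" where
  "statically_tenable F att A \<longleftrightarrow>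
     (\<forall>B. B \<subseteq> F \<and> finite B \<and> conflict_free att B \<longrightarrow>
        (\<exists>C. C \<subseteq> F \<and> A \<subseteq> C \<and> conflict_free att C \<and> cogent F att C B))"

text \<open>Strong tenability disputes: a finite nonempty list (X_0, ..., X_n) of
subsets of F; even indices are Pro moves, odd indices Opp moves.\<close>
definition st_dispute :: "'a set \<Rightarrow> ('a \<Rightarrow> 'a \<Rightarrow> bool) \<Rightarrow> 'a set list \<Rightarrow> bool" where
  "st_dispute F att xs \<longleftrightarrow>
     xs \<noteq> [] \<and>
     (\<forall>i < length xs. xs ! i \<subseteq> F \<and> conflict_free att (xs ! i)) \<and>
     (\<forall>i. i + 2 < length xs \<longrightarrow> xs ! i \<subseteq> xs ! (i + 2)) \<and>
     (1 < length xs \<longrightarrow> finite (xs ! 1)) \<and>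
     (\<forall>i. i + 2 < length xs \<longrightarrow> finite (xs ! (i + 2) - xs ! i)) \<and>
     (\<forall>k. 1 \<le> k \<and> 2 * k < length xs \<longrightarrow> cogent F att (xs ! (2 * k)) (xs ! (2 * k - 1))) \<and>
     (\<forall>k. 2 * k + 1 < length xs \<longrightarrow> \<not> cogent F att (xs ! (2 * k)) (xs ! (2 * k + 1)))"

definition follows_strategy :: "('a set list \<Rightarrow> 'a set) \<Rightarrow> 'a set list \<Rightarrow> bool" where
  "follows_strategy \<sigma> xs \<longleftrightarrow>
     (\<forall>k. 1 \<le> k \<and> 2 * k < length xs \<longrightarrow> xs ! (2 * k) = \<sigma> (take (2 * k) xs))"

text \<open>sigma is winning for Pro from A: whenever a dispute starting with A in
which Pro followed sigma ends with an Opp move, sigma's reply is legal. Hence no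
concluded dispute following sigma ends with an Opp move (i.e. is won by Opp);
concluded disputes ending with a Pro move and infinite plays are Pro wins.\<close>
definition winning_strategy :: "'a set \<Rightarrow> ('a \<Rightarrow> 'a \<Rightarrow> bool) \<Rightarrow> 'a set \<Rightarrow> ('a set list \<Rightarrow> 'a set) \<Rightarrow> bool" where
  "winning_strategy F att A \<sigma> \<longleftrightarrow>
     (\<forall>xs. st_dispute F att xs \<and> xs ! 0 = A \<and> even (length xs) \<and> follows_strategy \<sigma> xs
        \<longrightarrow> st_dispute F att (xs @ [\<sigma> xs]))"

definition strongly_tenable :: "'a set \<Rightarrow> ('a \<Rightarrow> 'a \<Rightarrow> bool) \<Rightarrow> 'a set \<Rightarrow> bool" where
  "strongly_tenable F att A \<longleftrightarrow>
     st_dispute F att [A] \<and> (\<exists>\<sigma>. winning_strategy F att A \<sigma>)"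

end

theory Submission
  imports Defs
begin

(* Argument 0 attacks every odd argument, and its attackers are the even
   arguments 2k > 0, each of which is in mutual conflict with every odd argument
   from 2k - 1 on.  Hence no conflict-free superset of all odd arguments defends
   itself against 0.  A finite set of odd arguments, however, together with one
   even argument beyond all of its elements, is admissible; Pro plays this set as
   the reply to every Opp move, after which Opp has no legal move left. *)

definition admissible :: "'a set \<Rightarrow> ('a \<Rightarrow> 'a \<Rightarrow> bool) \<Rightarrow> 'a set \<Rightarrow> bool" where
  "admissible F att P \<longleftrightarrow>
     conflict_free att P \<and> (\<forall>b. attacks_set att b P \<longrightarrow> b \<in> plus_set F att P)"

lemma cogent_if_admissible: "admissible F att P \<Longrightarrow> cogent F att P B"
  by (simp add: admissible_def cogent_def)

lemma conflict_free_subset: "conflict_free att B \<Longrightarrow> A \<subseteq> B \<Longrightarrow> conflict_free att A"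
  unfolding conflict_free_def by blast

lemma not_statically_tenable_if_undefendable:
  assumes "a \<in> F" "\<not> att a a" "attacks_set att a A"
    and conflict: "\<And>c. att c a \<Longrightarrow> \<exists>x\<in>A. att c x \<or> att x c"
  shows "\<not> statically_tenable F att A"
proof
  assume "statically_tenable F att A"
  moreover have "{a} \<subseteq> F \<and> finite {a} \<and> conflict_free att {a}"
    using assms(1,2) by (simp add: conflict_free_def)
  ultimately obtain C where C: "A \<subseteq> C" "conflict_free att C" "cogent F att C {a}"
    unfolding statically_tenable_def by (auto dest!: spec[of _ "{a}"])
  have "attacks_set att a C"
    using assms(3) C(1) by (auto simp: attacks_set_def)
  with C(3) obtain c where "c \<in> C" "att c a"
    by (auto simp: cogent_def plus_set_def)
  with conflict C(1,2) show False
    unfolding conflict_free_def by blast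
qed

lemma st_dispute_three_iff:
  "st_dispute F att [X\<^sub>0, X\<^sub>1, X\<^sub>2] \<longleftrightarrow>
     st_dispute F att [X\<^sub>0, X\<^sub>1] \<and> X\<^sub>2 \<subseteq> F \<and> conflict_free att X\<^sub>2 \<and>
     X\<^sub>0 \<subseteq> X\<^sub>2 \<and> finite (X\<^sub>2 - X\<^sub>0) \<and> cogent F att X\<^sub>2 X\<^sub>1"
proof -
  \<comment> \<open>the index conditions of \<open>st_dispute\<close>, in the form the simplifier leaves them\<close>
  have "(Suc 0 \<le> k \<and> 2 * k < Suc (Suc (Suc 0))) \<longleftrightarrow> k = 1"
    "\<not> (Suc 0 \<le> k \<and> 2 * k < Suc (Suc 0))"
    "(2 * k < Suc (Suc 0)) \<longleftrightarrow> k = 0" "(2 * k < Suc 0) \<longleftrightarrow> k = 0"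
    "(i + 2 < Suc (Suc (Suc 0))) \<longleftrightarrow> i = 0" "\<not> (i + 2 < Suc (Suc 0))" for i k :: nat
    by auto
  then show ?thesis
    unfolding st_dispute_def by (auto simp: All_less_Suc)
qed

lemma st_dispute_ends_after_admissible_move:
  assumes "st_dispute F att xs" "2 * k < length xs" "admissible F att (xs ! (2 * k))"
  shows "length xs = 2 * k + 1"
proof (rule ccontr)
  assume "length xs \<noteq> 2 * k + 1"
  with assms(1,2) have "\<not> cogent F att (xs ! (2 * k)) (xs ! (2 * k + 1))"
    unfolding st_dispute_def by auto
  with assms(3) show False
    by (simp add: cogent_if_admissible)
qed

lemma strongly_tenable_if_admissible_superset:
  assumes "A \<subseteq> P" "finite (P - A)" "P \<subseteq> F" "admissible F att P"
  shows "strongly_tenable F att A"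
  unfolding strongly_tenable_def
proof (intro conjI exI)
  have cf_P: "conflict_free att P"
    using assms(4) by (simp add: admissible_def)
  then show "st_dispute F att [A]"
    using assms(1,3) by (auto simp: st_dispute_def intro: conflict_free_subset)
  show "winning_strategy F att A (\<lambda>_. P)"
    unfolding winning_strategy_def
  proof (intro allI impI)
    fix xs
    assume "st_dispute F att xs \<and> xs ! 0 = A \<and> even (length xs) \<and> follows_strategy (\<lambda>_. P) xs"
    then have dispute: "st_dispute F att xs" and start: "xs ! 0 = A"
      and even_length: "even (length xs)" and follows: "follows_strategy (\<lambda>_. P) xs"
      by auto
    have "length xs = 2"
    proof (rule ccontr)
      assume "length xs \<noteq> 2"
      moreover have "length xs \<noteq> 0"
        using dispute by (simp add: st_dispute_def)
      ultimately have "4 \<le> length xs"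
        using even_length by presburger
      with follows have "xs ! (2 * 1) = P"
        unfolding follows_strategy_def by (auto dest!: spec[of _ 1])
      with dispute assms(4) \<open>4 \<le> length xs\<close> show False
        using st_dispute_ends_after_admissible_move[of F att xs 1] by simp
    qed
    then have xs: "xs = [A, xs ! 1]"
      using start by (simp add: list_eq_iff_nth_eq less_2_cases_iff)
    with dispute have "st_dispute F att [A, xs ! 1, P]"
      using assms cf_P by (simp add: st_dispute_three_iff cogent_if_admissible)
    with xs show "st_dispute F att (xs @ [P])"
      by (metis append_Cons append_Nil)
  qed
qed

definition parity_att :: "nat \<Rightarrow> nat \<Rightarrow> bool" where
  "parity_att x y \<longleftrightarrow>
     (x = 0 \<and> odd y) \<or> (even x \<and> x > 0 \<and> y = 0) \<or>
     (even x \<and> x > 0 \<and> odd y \<and> x \<le> y + 1) \<or> (odd x \<and> even y \<and> y > 0 \<and> y \<le> x + 1)"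

lemma not_statically_tenable_odd: "\<not> statically_tenable UNIV parity_att {y. odd y}"
proof (rule not_statically_tenable_if_undefendable)
  show "attacks_set parity_att 0 {y. odd y}"
    unfolding attacks_set_def parity_att_def by (rule bexI[of _ 1]) auto
  fix c
  assume "parity_att c 0"
  then have "parity_att c (c - 1)" "odd (c - 1)"
    by (auto simp: parity_att_def)
  then show "\<exists>x\<in>{y. odd y}. parity_att c x \<or> parity_att x c"
    by blast
qed (simp_all add: parity_att_def)

lemma admissible_insert_even_bound:
  assumes "A \<subseteq> {y. odd y}" "finite A"
  shows "admissible UNIV parity_att (insert (2 * \<Sum>A + 2) A)"
  unfolding admissible_def
proof
  let ?n = "2 * \<Sum>A + 2"
  have small: "y + 1 < ?n" if "y \<in> A" for y
    using member_le_sum[of y A "\<lambda>x. x"] that assms(2) by simp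
  show "conflict_free parity_att (insert ?n A)"
    unfolding conflict_free_def
  proof (intro ballI)
    fix x y
    assume "x \<in> insert ?n A" "y \<in> insert ?n A"
    then have "x = ?n \<or> odd x \<and> x + 1 < ?n" "y = ?n \<or> odd y \<and> y + 1 < ?n"
      using assms(1) small by auto
    then show "\<not> parity_att x y"
      by (auto simp: parity_att_def odd_pos)
  qed
  show "\<forall>b. attacks_set parity_att b (insert ?n A) \<longrightarrow> b \<in> plus_set UNIV parity_att (insert ?n A)"
    using assms(1) by (auto simp: attacks_set_def plus_set_def parity_att_def)
qed

theorem theorem8:
  shows "\<exists>(F :: nat set) (att :: nat \<Rightarrow> nat \<Rightarrow> bool) A.
           is_AF F att \<and> A \<subseteq> F \<and>
           \<not> statically_tenable F att A \<and>
           (\<forall>A'. A' \<subseteq> A \<and> finite A' \<longrightarrow> strongly_tenable F att A')"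
proof (intro exI conjI allI impI)
  show "is_AF UNIV parity_att"
    by (simp add: is_AF_def)
  show "\<not> statically_tenable UNIV parity_att {y. odd y}"
    by (rule not_statically_tenable_odd)
  fix A :: "nat set"
  assume "A \<subseteq> {y. odd y} \<and> finite A"
  then show "strongly_tenable UNIV parity_att A"
    by (intro strongly_tenable_if_admissible_superset[of A "insert (2 * \<Sum>A + 2) A"]
        admissible_insert_even_bound) auto
qed simp

end
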